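(* Let $d\in\mathbb{N}$, $d>1$, and write $a:=\lceil\log_2d\rceil$. For any $0<\epsilon\le\frac{3^{a}-1}{3^{a-1}-1}$ (read as $+\infty$ when $3^{a-1}-1=0$), there exists a ReLU FNN function $f^{(mtp)}_{FF,d}:\mathbb{R}^d\to\mathbb{R}$ with width $21\cdot2^{a-1}$, depth $C\ln\frac{3^{a}-1}{2\epsilon}$ and weight bound $C$, where $C$ is a constant independent of $\epsilon$, such that for all $\boldsymbol x\in[0,1]^d$, $$|f^{(mtp)}_{FF,d}(\boldsymbol x)-x_1\cdots x_d|\le\epsilon.$$
   Context: ReLU FNN of depth $L$, width $W$: $f_0=x$, $f_l=\sigma_R(W_lf_{l-1}+b_l)$ ($1\le l\le L-1$), $f=W_Lf_{L-1}+b_L$ with hidden layers of width $W$, $\sigma_R(x)=\max\{x,0\}$; the weight bound is the maximum absolute value of all weights and biases. *)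

theory Defs
  imports Complex_Main
begin

text \<open>A layer is a pair (weight matrix, bias vector); vectors are nat-indexed
  functions, only indices below the relevant dimension matter.\<close>

type_synonym layer = "(nat \<Rightarrow> nat \<Rightarrow> real) \<times> (nat \<Rightarrow> real)"

definition relu :: "real \<Rightarrow> real" where
  "relu x = max x 0"

definition affine :: "nat \<Rightarrow> layer \<Rightarrow> (nat \<Rightarrow> real) \<Rightarrow> (nat \<Rightarrow> real)" where
  "affine n l x = (\<lambda>i. (\<Sum>j<n. fst l i j * x j) + snd l i)"

text \<open>Evaluation: first argument is the input dimension of the current layer,
  second the hidden width W. ReLU after every layer except the last.\<close>
fun net_eval :: "nat \<Rightarrow> nat \<Rightarrow> layer list \<Rightarrow> (nat \<Rightarrow> real) \<Rightarrow> (nat \<Rightarrow> real)" where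
  "net_eval n W [] x = x"
| "net_eval n W [l] x = affine n l x"
| "net_eval n W (l # l' # ls) x = net_eval W W (l' # ls) (\<lambda>i. relu (affine n l x i))"

definition fnn_fun :: "nat \<Rightarrow> nat \<Rightarrow> layer list \<Rightarrow> (nat \<Rightarrow> real) \<Rightarrow> real" where
  "fnn_fun d W ls x = net_eval d W ls x 0"

definition relu_fnn :: "nat \<Rightarrow> nat \<Rightarrow> nat \<Rightarrow> real \<Rightarrow> layer list \<Rightarrow> bool" where
  "relu_fnn d W L B ls \<longleftrightarrow>
     L \<ge> 1 \<and> length ls = L \<and>
     (\<forall>k<L. let n_in = (if k = 0 then d else W);
                n_out = (if k = L - 1 then 1 else W) in
        (\<forall>i<n_out. \<bar>snd (ls ! k) i\<bar> \<le> B \<and> (\<forall>j<n_in. \<bar>fst (ls ! k) i j\<bar> \<le> B)))"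

end

theory Submission
  imports Defs
begin

text \<open>Yarotsky's construction. On \<open>[0, 1]\<close> the tent map \<open>g\<close> is computed exactly by two ReLU
  neurons, and \<open>t - t\<^sup>2 = (\<Sum>s\<ge>1. g\<^sup>s t / 4\<^sup>s)\<close>. Combined with the polarisation identity
  \<open>x y = (x + y) / 2 - (2 \<phi> ((x + y) / 2) - \<phi> x / 2 - \<phi> y / 2)\<close> for \<open>\<phi> t = t - t\<^sup>2\<close>,
  truncating the series after \<open>m\<close> terms multiplies two numbers of \<open>[0, 1]\<close> with error at most
  \<open>1 / (2 * 4\<^sup>m)\<close> using \<open>m + 2\<close> layers of constant width.

  Instead of the binary tree of the paper, the factors are multiplied in sequentially while
  identity neurons carry the inputs along; clipping every partial product to \<open>[0, 1]\<close> keeps the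
  errors additive, so the total error is at most \<open>(d - 1) / (2 * 4\<^sup>m)\<close>. With
  \<open>m = nat \<lceil>log 4 (d / \<epsilon>)\<rceil>\<close> this gives width \<open>d + 9 \<le> 21 * 2 ^ (a - 1)\<close>, depth
  \<open>(d - 1) (m + 2) + 2 = O(ln (1 / \<epsilon>))\<close> and weights bounded by 19.\<close>

section \<open>Sparse layers and evaluation of networks\<close>

definition sparse_layer :: "(nat \<Rightarrow> (nat \<times> real) list) \<Rightarrow> (nat \<Rightarrow> real) \<Rightarrow> layer" where
  "sparse_layer rows b = ((\<lambda>i j. \<Sum>(k, w)\<leftarrow>rows i. if j = k then w else 0), b)"

lemma sum_sparse_row:
  fixes s :: "nat \<Rightarrow> real"
  assumes "\<forall>(k, w)\<in>set ws. k < n"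
  shows "(\<Sum>j<n. (\<Sum>(k, w)\<leftarrow>ws. if j = k then w else 0) * s j) = (\<Sum>(k, w)\<leftarrow>ws. w * s k)"
  using assms
proof (induction ws)
  case Nil
  then show ?case by simp
next
  case (Cons kw ws)
  obtain k w where kw: "kw = (k, w)" by fastforce
  have "(\<Sum>j<n. (if j = k then w else 0) * s j) = (\<Sum>j<n. if j = k then w * s k else 0)"
    by (rule sum.cong) auto
  also have "\<dots> = w * s k"
    using Cons.prems kw by simp
  finally show ?case
    using Cons kw by (simp add: distrib_right sum.distrib)
qed

lemma affine_sparse_layer:
  assumes "\<forall>(k, w)\<in>set (rows i). k < n"
  shows "affine n (sparse_layer rows b) s i = (\<Sum>(k, w)\<leftarrow>rows i. w * s k) + b i"
  using sum_sparse_row[OF assms] by (simp add: affine_def sparse_layer_def)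

lemma abs_sum_sparse_row_le:
  "\<bar>\<Sum>(k, w)\<leftarrow>ws. if j = k then w else 0\<bar> \<le> (\<Sum>(k, w)\<leftarrow>ws. \<bar>w::real\<bar>)"
  by (induction ws) (auto intro: order.trans[OF abs_triangle_ineq])

lemma abs_sparse_layer_weight_le:
  "\<bar>fst (sparse_layer rows b) i j\<bar> \<le> (\<Sum>(k, w)\<leftarrow>rows i. \<bar>w\<bar>)"
  by (simp add: sparse_layer_def abs_sum_sparse_row_le)

definition relu_layer :: "nat \<Rightarrow> layer \<Rightarrow> (nat \<Rightarrow> real) \<Rightarrow> (nat \<Rightarrow> real)" where
  "relu_layer n l x = (\<lambda>i. relu (affine n l x i))"

definition hidden_layers :: "nat \<Rightarrow> layer list \<Rightarrow> (nat \<Rightarrow> real) \<Rightarrow> (nat \<Rightarrow> real)" where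
  "hidden_layers W hs x = foldl (\<lambda>y l. relu_layer W l y) x hs"

lemma hidden_layers_Nil [simp]: "hidden_layers W [] x = x"
  by (simp add: hidden_layers_def)

lemma hidden_layers_Cons [simp]: "hidden_layers W (l # hs) x = hidden_layers W hs (relu_layer W l x)"
  by (simp add: hidden_layers_def)

lemma hidden_layers_append [simp]:
  "hidden_layers W (hs @ hs') x = hidden_layers W hs' (hidden_layers W hs x)"
  by (simp add: hidden_layers_def)

lemma net_eval_Cons_snoc:
  "net_eval n W (l # hs @ [l']) x = affine W l' (hidden_layers W hs (relu_layer n l x))"
  by (induction hs arbitrary: n l x) (simp_all add: relu_layer_def)

lemma fnn_fun_Cons_snoc:
  "fnn_fun d W (l # hs @ [l']) x = affine W l' (hidden_layers W hs (relu_layer d l x)) 0"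
  by (simp add: fnn_fun_def net_eval_Cons_snoc)

definition layer_bounded :: "real \<Rightarrow> layer \<Rightarrow> bool" where
  "layer_bounded B l \<longleftrightarrow> (\<forall>i j. \<bar>fst l i j\<bar> \<le> B \<and> \<bar>snd l i\<bar> \<le> B)"

lemma layer_bounded_mono: "B \<le> B' \<Longrightarrow> layer_bounded B l \<Longrightarrow> layer_bounded B' l"
  unfolding layer_bounded_def by (meson order_trans)

lemma layer_bounded_sparse_layer:
  assumes "\<And>i. (\<Sum>(k, w)\<leftarrow>rows i. \<bar>w\<bar>) \<le> B" and "\<And>i. \<bar>b i\<bar> \<le> B"
  shows "layer_bounded B (sparse_layer rows b)"
  using assms order_trans[OF abs_sparse_layer_weight_le]
  by (auto simp: layer_bounded_def sparse_layer_def)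

lemma relu_fnn_if_layer_bounded:
  assumes "ls \<noteq> []" and "\<forall>l\<in>set ls. layer_bounded B l"
  shows "relu_fnn d W (length ls) B ls"
  using assms by (auto simp: relu_fnn_def layer_bounded_def Let_def Suc_le_eq)

section \<open>The tent map and products\<close>

definition tent :: "real \<Rightarrow> real" where
  "tent t = 2 * relu t - 4 * relu (t - 1/2)"

definition sq_defect :: "real \<Rightarrow> real" where
  "sq_defect t = t - t\<^sup>2"

lemma relu_of_nonneg [simp]: "0 \<le> t \<Longrightarrow> relu t = t"
  by (simp add: relu_def)

lemma tent_eq: "0 \<le> t \<Longrightarrow> tent t = 2 * t - 4 * relu (t - 1/2)"
  by (simp add: tent_def)

lemma tent_mem_unit: "0 \<le> t \<Longrightarrow> t \<le> 1 \<Longrightarrow> 0 \<le> tent t \<and> tent t \<le> 1"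
  by (cases "t \<le> 1/2") (auto simp: tent_def relu_def)

lemma funpow_tent_mem_unit: "0 \<le> t \<Longrightarrow> t \<le> 1 \<Longrightarrow> 0 \<le> (tent ^^ n) t \<and> (tent ^^ n) t \<le> 1"
  by (induction n) (auto simp: tent_mem_unit)

lemma sq_defect_bounds:
  assumes "0 \<le> t" "t \<le> 1"
  shows "0 \<le> sq_defect t \<and> sq_defect t \<le> 1/4"
proof -
  have "sq_defect t = 1/4 - (t - 1/2)\<^sup>2"
    by (simp add: sq_defect_def power2_eq_square field_simps)
  moreover have "0 \<le> sq_defect t"
    using mult_left_le[OF assms(2,1)] by (simp add: sq_defect_def power2_eq_square)
  ultimately show ?thesis
    by simp
qed

lemma sq_defect_tent: "0 \<le> t \<Longrightarrow> t \<le> 1 \<Longrightarrow> sq_defect t = tent t / 4 + sq_defect (tent t) / 4"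
  by (cases "t \<le> 1/2") (auto simp: tent_def relu_def sq_defect_def power2_eq_square field_simps)

text \<open>The polarisation identity with \<open>t - t\<^sup>2\<close> replaced by the first \<open>r\<close> terms of its series;
  the second summand is the remainder.\<close>
definition prod_approx :: "nat \<Rightarrow> real \<Rightarrow> real \<Rightarrow> real" where
  "prod_approx r y x = y * x +
     (2 * sq_defect ((tent ^^ r) ((y + x) / 2)) - sq_defect ((tent ^^ r) y) / 2
        - sq_defect ((tent ^^ r) x) / 2) / 4 ^ r"

lemma prod_approx_0: "prod_approx 0 y x = (y + x) / 2"
  by (simp add: prod_approx_def sq_defect_def power2_eq_square field_simps)

lemma sq_defect_funpow_tent_Suc:
  assumes "0 \<le> t" "t \<le> 1"
  shows "sq_defect ((tent ^^ Suc r) t) / 4 ^ Suc r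
    = sq_defect ((tent ^^ r) t) / 4 ^ r - (tent ^^ Suc r) t / 4 ^ Suc r"
proof -
  have "sq_defect ((tent ^^ r) t) = (tent ^^ Suc r) t / 4 + sq_defect ((tent ^^ Suc r) t) / 4"
    using sq_defect_tent funpow_tent_mem_unit[OF assms] by simp
  then show ?thesis
    by (simp add: field_simps)
qed

lemma prod_approx_Suc:
  assumes "0 \<le> y" "y \<le> 1" "0 \<le> x" "x \<le> 1"
  shows "prod_approx (Suc r) y x = prod_approx r y x
    - (2 * (tent ^^ Suc r) ((y + x) / 2) - (tent ^^ Suc r) y / 2 - (tent ^^ Suc r) x / 2) / 4 ^ Suc r"
proof -
  have "0 \<le> (y + x) / 2" "(y + x) / 2 \<le> 1"
    using assms by auto
  note S = sq_defect_funpow_tent_Suc[OF this] sq_defect_funpow_tent_Suc[OF assms(1,2)]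
    sq_defect_funpow_tent_Suc[OF assms(3,4)]
  have D: "\<And>a b c q :: real. (2 * a - b / 2 - c / 2) / q = 2 * (a / q) - b / q / 2 - c / q / 2"
    by (simp add: diff_divide_distrib)
  show ?thesis
    unfolding prod_approx_def D S by (simp add: field_simps)
qed

lemma abs_prod_approx_diff_le:
  assumes "0 \<le> y" "y \<le> 1" "0 \<le> x" "x \<le> 1"
  shows "\<bar>prod_approx r y x - y * x\<bar> \<le> 1 / (2 * 4 ^ r)"
proof -
  have bound: "0 \<le> sq_defect ((tent ^^ r) t) \<and> sq_defect ((tent ^^ r) t) \<le> 1 / 4"
    if "0 \<le> t" "t \<le> 1" for t
    using sq_defect_bounds funpow_tent_mem_unit that by blast
  have "0 \<le> (y + x) / 2" "(y + x) / 2 \<le> 1"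
    using assms by auto
  then have "\<bar>2 * sq_defect ((tent ^^ r) ((y + x) / 2)) - sq_defect ((tent ^^ r) y) / 2
      - sq_defect ((tent ^^ r) x) / 2\<bar> \<le> 1 / 2"
    using bound bound[OF assms(1,2)] bound[OF assms(3,4)] unfolding abs_le_iff by fastforce
  then show ?thesis
    by (simp add: prod_approx_def abs_divide divide_right_mono field_simps)
qed

lemma one_plus_prod_approx_nonneg:
  assumes "0 \<le> y" "y \<le> 1" "0 \<le> x" "x \<le> 1"
  shows "0 \<le> 1 + prod_approx r y x"
proof -
  have "(1 :: real) \<le> 2 * 4 ^ r"
    using one_le_power[of "4 :: real" r] by linarith
  then have "1 / (2 * 4 ^ r) \<le> (1 :: real)"
    by simp
  then show ?thesis
    using abs_prod_approx_diff_le[OF assms, of r] mult_nonneg_nonneg[OF assms(1,3)] by linarith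
qed

section \<open>The product network\<close>

text \<open>Neuron layout: \<open>0, \<dots>, d - 1\<close> carry the input, the pairs starting at \<open>d\<close>,
  \<open>d + 2\<close>, \<open>d + 4\<close> the tent orbits of \<open>(y + x) / 2\<close>, \<open>y\<close> and \<open>x\<close>, neuron \<open>d + 6\<close> the
  running approximation shifted by \<open>1\<close> (so that it stays nonnegative and the ReLU acts as
  the identity on it), and \<open>d + 7\<close>, \<open>d + 8\<close> the clipped partial product as their difference.\<close>

definition encodes_tent :: "(nat \<Rightarrow> real) \<Rightarrow> nat \<Rightarrow> real \<Rightarrow> bool" where
  "encodes_tent s i t \<longleftrightarrow> s i = t \<and> s (i + 1) = relu (t - 1/2)"

lemma encodes_tent_tent:
  "encodes_tent s i t \<Longrightarrow> 0 \<le> t \<Longrightarrow> 2 * s i - 4 * s (i + 1) = tent t"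
  by (simp add: encodes_tent_def tent_eq)

definition readout :: "nat \<Rightarrow> (nat \<Rightarrow> real) \<Rightarrow> real" where
  "readout d s = s (d + 7) - s (d + 8)"

definition clip_layer :: "nat \<Rightarrow> nat \<Rightarrow> real \<Rightarrow> layer" where
  "clip_layer d j c = sparse_layer
     (\<lambda>i. if i < d then [(i, 1)] else if i = d + 7 \<or> i = d + 8 then [(j, 1)] else [])
     (\<lambda>i. if i = d + 7 then c else if i = d + 8 then c - 1 else 0)"

definition init_layer :: "nat \<Rightarrow> nat \<Rightarrow> layer" where
  "init_layer d k = sparse_layer
     (\<lambda>i. if i < d then [(i, 1)]
       else if i = d \<or> i = d + 1 \<or> i = d + 6 then [(d + 7, 1/2), (d + 8, -1/2), (k, 1/2)]
       else if i = d + 2 \<or> i = d + 3 then [(d + 7, 1), (d + 8, -1)]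
       else if i = d + 4 \<or> i = d + 5 then [(k, 1)]
       else [])
     (\<lambda>i. if i = d + 1 \<or> i = d + 3 \<or> i = d + 5 then -1/2 else if i = d + 6 then 1 else 0)"

definition step_layer :: "nat \<Rightarrow> nat \<Rightarrow> layer" where
  "step_layer d r = sparse_layer
     (\<lambda>i. if i < d then [(i, 1)]
       else if i = d \<or> i = d + 1 then [(d, 2), (d + 1, -4)]
       else if i = d + 2 \<or> i = d + 3 then [(d + 2, 2), (d + 3, -4)]
       else if i = d + 4 \<or> i = d + 5 then [(d + 4, 2), (d + 5, -4)]
       else if i = d + 6 then [(d + 6, 1), (d, -4 / 4 ^ r), (d + 1, 8 / 4 ^ r),
         (d + 2, 1 / 4 ^ r), (d + 3, -2 / 4 ^ r), (d + 4, 1 / 4 ^ r), (d + 5, -2 / 4 ^ r)]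
       else [])
     (\<lambda>i. if i = d + 1 \<or> i = d + 3 \<or> i = d + 5 then -1/2 else 0)"

definition out_layer :: "nat \<Rightarrow> layer" where
  "out_layer d = sparse_layer (\<lambda>i. [(d + 7, 1), (d + 8, -1)]) (\<lambda>i. 0)"

definition step_state :: "nat \<Rightarrow> (nat \<Rightarrow> real) \<Rightarrow> real \<Rightarrow> real \<Rightarrow> nat \<Rightarrow> (nat \<Rightarrow> real) \<Rightarrow> bool" where
  "step_state d xs y x r s \<longleftrightarrow> (\<forall>j<d. s j = xs j) \<and>
     encodes_tent s d ((tent ^^ r) ((y + x) / 2)) \<and>
     encodes_tent s (d + 2) ((tent ^^ r) y) \<and>
     encodes_tent s (d + 4) ((tent ^^ r) x) \<and>
     s (d + 6) = 1 + prod_approx r y x"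

lemma relu_layer_clip_layer:
  assumes "j < n" "d \<le> n"
  shows "\<forall>i<d. relu_layer n (clip_layer d j c) s i = relu (s i)"
    and "readout d (relu_layer n (clip_layer d j c) s) = relu (s j + c) - relu (s j + c - 1)"
  using assms
  by (simp_all add: relu_layer_def clip_layer_def readout_def affine_sparse_layer add_diff_eq)

lemma step_state_init_layer:
  assumes "d + 9 \<le> W" "k < d" "\<forall>j<d. s j = xs j" "\<forall>j<d. 0 \<le> xs j"
    and "y = readout d s" "0 \<le> y" "y \<le> 1" "0 \<le> xs k" "xs k \<le> 1"
  shows "step_state d xs y (xs k) 0 (relu_layer W (init_layer d k) s)"
proof -
  have "s (d + 7) = y + s (d + 8)" "s k = xs k"
    using assms by (simp_all add: readout_def)
  then show ?thesis
    using assms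
    by (simp add: step_state_def encodes_tent_def prod_approx_0 relu_layer_def init_layer_def
        affine_sparse_layer field_simps)
qed

lemma step_state_step_layer:
  assumes "d + 9 \<le> W" "step_state d xs y x r s" "\<forall>j<d. 0 \<le> xs j"
    and "0 \<le> y" "y \<le> 1" "0 \<le> x" "x \<le> 1"
  shows "step_state d xs y x (Suc r) (relu_layer W (step_layer d (Suc r)) s)"
proof -
  define t0 t1 t2 where "t0 = (tent ^^ r) ((y + x) / 2)" and "t1 = (tent ^^ r) y"
    and "t2 = (tent ^^ r) x"
  have nonneg: "0 \<le> t0" "0 \<le> t1" "0 \<le> t2"
    using funpow_tent_mem_unit assms(4-7) by (simp_all add: t0_def t1_def t2_def)
  have enc: "encodes_tent s d t0" "encodes_tent s (d + 2) t1" "encodes_tent s (d + 4) t2"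
    using assms(2) by (simp_all add: step_state_def t0_def t1_def t2_def)
  have idx: "d + 2 + 1 = d + 3" "d + 4 + 1 = d + 5"
    by simp_all
  have tents: "2 * s d - 4 * s (d + 1) = tent t0" "2 * s (d + 2) - 4 * s (d + 3) = tent t1"
    "2 * s (d + 4) - 4 * s (d + 5) = tent t2"
    using encodes_tent_tent[OF enc(1) nonneg(1)] encodes_tent_tent[OF enc(2) nonneg(2)]
      encodes_tent_tent[OF enc(3) nonneg(3)] unfolding idx .
  have acc: "s (d + 6) - (2 * tent t0 - tent t1 / 2 - tent t2 / 2) / 4 ^ Suc r
    = 1 + prod_approx (Suc r) y x"
    using assms(2) prod_approx_Suc[OF assms(4-7)] by (simp add: step_state_def t0_def t1_def t2_def)
  have aff: "\<forall>j<d. affine W (step_layer d (Suc r)) s j = s j"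
    "affine W (step_layer d (Suc r)) s d = tent t0"
    "affine W (step_layer d (Suc r)) s (d + 1) = tent t0 - 1/2"
    "affine W (step_layer d (Suc r)) s (d + 2) = tent t1"
    "affine W (step_layer d (Suc r)) s (d + 3) = tent t1 - 1/2"
    "affine W (step_layer d (Suc r)) s (d + 4) = tent t2"
    "affine W (step_layer d (Suc r)) s (d + 5) = tent t2 - 1/2"
    "affine W (step_layer d (Suc r)) s (d + 6) = 1 + prod_approx (Suc r) y x"
    using assms(1) unfolding tents[symmetric] acc[symmetric]
    by (simp_all add: step_layer_def affine_sparse_layer field_simps)
  have "0 \<le> tent t0" "0 \<le> tent t1" "0 \<le> tent t2"
    using tent_mem_unit funpow_tent_mem_unit assms(4-7) by (simp_all add: t0_def t1_def t2_def)
  then show ?thesis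
    using aff assms(2,3) enc one_plus_prod_approx_nonneg[OF assms(4-7)]
    unfolding step_state_def encodes_tent_def relu_layer_def idx
    by (simp add: t0_def t1_def t2_def)
qed

lemma step_state_step_layers:
  assumes "d + 9 \<le> W" "step_state d xs y x 0 s" "\<forall>j<d. 0 \<le> xs j"
    and "0 \<le> y" "y \<le> 1" "0 \<le> x" "x \<le> 1"
  shows "step_state d xs y x m (hidden_layers W (map (step_layer d) [1..<m + 1]) s)"
proof (induction m)
  case 0
  then show ?case using assms(2) by simp
next
  case (Suc m)
  then show ?case
    using step_state_step_layer[OF assms(1) Suc assms(3-7)] by simp
qed

lemma relu_diff_clamp:
  assumes "0 \<le> z" "z \<le> 1"
  shows "0 \<le> relu p - relu (p - 1)" "relu p - relu (p - 1) \<le> 1"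
    and "\<bar>relu p - relu (p - 1) - z\<bar> \<le> \<bar>p - z\<bar>"
  using assms by (auto simp: relu_def)

definition valid_state :: "nat \<Rightarrow> (nat \<Rightarrow> real) \<Rightarrow> (nat \<Rightarrow> real) \<Rightarrow> bool" where
  "valid_state d xs s \<longleftrightarrow> (\<forall>j<d. s j = xs j) \<and> 0 \<le> readout d s \<and> readout d s \<le> 1"

definition block :: "nat \<Rightarrow> nat \<Rightarrow> nat \<Rightarrow> layer list" where
  "block d m k = init_layer d k # map (step_layer d) [1..<m + 1] @ [clip_layer d (d + 6) (-1)]"

lemma block_correct:
  assumes "d + 9 \<le> W" "k < d" "\<forall>j<d. 0 \<le> xs j \<and> xs j \<le> 1" "valid_state d xs s"
  shows "valid_state d xs (hidden_layers W (block d m k) s)"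
    and "\<bar>readout d (hidden_layers W (block d m k) s) - readout d s * xs k\<bar> \<le> 1 / (2 * 4 ^ m)"
proof -
  define y where "y = readout d s"
  have y: "0 \<le> y" "y \<le> 1" and x: "0 \<le> xs k" "xs k \<le> 1"
    using assms(2-4) by (auto simp: valid_state_def y_def)
  define s' where "s' = hidden_layers W (map (step_layer d) [1..<m + 1])
    (relu_layer W (init_layer d k) s)"
  have "step_state d xs y (xs k) m s'"
    unfolding s'_def using assms(1-4) y x
    by (intro step_state_step_layers step_state_init_layer) (auto simp: valid_state_def y_def)
  then have s': "\<forall>j<d. s' j = xs j" "s' (d + 6) - 1 = prod_approx m y (xs k)"
    by (simp_all add: step_state_def)
  have block: "hidden_layers W (block d m k) s = relu_layer W (clip_layer d (d + 6) (-1)) s'"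
    by (simp add: block_def s'_def)
  have "d + 6 < W" "d \<le> W"
    using assms(1) by simp_all
  note clip = relu_layer_clip_layer[OF this, of "-1" s']
  have "0 \<le> y * xs k" "y * xs k \<le> 1"
    using y x by (simp_all add: mult_le_one)
  note clamp = relu_diff_clamp[OF this, of "prod_approx m y (xs k)"]
  show "valid_state d xs (hidden_layers W (block d m k) s)"
    using clip clamp s' assms(3) by (simp add: valid_state_def block)
  show "\<bar>readout d (hidden_layers W (block d m k) s) - readout d s * xs k\<bar> \<le> 1 / (2 * 4 ^ m)"
    using clip clamp(3) s' abs_prod_approx_diff_le[OF y x, of m]
    by (simp add: block y_def[symmetric])
qed

definition product_state :: "nat \<Rightarrow> nat \<Rightarrow> nat \<Rightarrow> nat \<Rightarrow> (nat \<Rightarrow> real) \<Rightarrow> (nat \<Rightarrow> real)" where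
  "product_state d W m n x =
     hidden_layers W (concat (map (block d m) [1..<Suc n])) (relu_layer d (clip_layer d 0 0) x)"

lemma product_state_correct:
  assumes "d + 9 \<le> W" "\<forall>i<d. 0 \<le> x i \<and> x i \<le> 1" "n < d"
  shows "valid_state d x (product_state d W m n x) \<and>
    \<bar>readout d (product_state d W m n x) - (\<Prod>i<Suc n. x i)\<bar> \<le> n / (2 * 4 ^ m)"
  using assms(3)
proof (induction n)
  case 0
  then have "0 < d" "d \<le> d"
    by simp_all
  note clip = relu_layer_clip_layer[OF this, of 0 x]
  have "0 \<le> x 0" "x 0 \<le> 1"
    using assms(2) \<open>0 < d\<close> by simp_all
  then show ?case
    using clip assms(2) by (simp add: product_state_def valid_state_def relu_def)
next
  case (Suc n)
  define s where "s = product_state d W m n x"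
  have step: "product_state d W m (Suc n) x = hidden_layers W (block d m (Suc n)) s"
    by (simp add: product_state_def s_def)
  have valid: "valid_state d x s" and err: "\<bar>readout d s - (\<Prod>i<Suc n. x i)\<bar> \<le> n / (2 * 4 ^ m)"
    using Suc by (simp_all add: s_def)
  note block = block_correct[OF assms(1) Suc.prems assms(2) valid, of m]
  have x: "0 \<le> x (Suc n)" "x (Suc n) \<le> 1"
    using assms(2) Suc.prems by simp_all
  have "\<bar>readout d s * x (Suc n) - (\<Prod>i<Suc n. x i) * x (Suc n)\<bar> \<le> n / (2 * 4 ^ m)"
    using err x mult_right_le_one_le[of "\<bar>readout d s - (\<Prod>i<Suc n. x i)\<bar>" "x (Suc n)"]
    by (simp add: abs_mult left_diff_distrib[symmetric])
  then show ?case
    using block by (simp add: step add_divide_distrib)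
qed

definition product_net :: "nat \<Rightarrow> nat \<Rightarrow> layer list" where
  "product_net d m = clip_layer d 0 0 # concat (map (block d m) [1..<d]) @ [out_layer d]"

lemma product_net_correct:
  assumes "d + 9 \<le> W" "0 < d" "\<forall>i<d. 0 \<le> x i \<and> x i \<le> 1"
  shows "\<bar>fnn_fun d W (product_net d m) x - (\<Prod>i<d. x i)\<bar> \<le> (real d - 1) / (2 * 4 ^ m)"
proof -
  have "fnn_fun d W (product_net d m) x = readout d (product_state d W m (d - 1) x)"
    using assms(1,2)
    by (simp add: product_net_def fnn_fun_Cons_snoc product_state_def out_layer_def
        affine_sparse_layer readout_def)
  then show ?thesis
    using product_state_correct[OF assms(1,3), of "d - 1" m] assms(2) by simp
qed

lemma length_product_net: "length (product_net d m) = (d - 1) * (m + 2) + 2"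
  by (simp add: product_net_def block_def length_concat o_def sum_list_triv)

lemma layer_bounded_clip_layer: "\<bar>c\<bar> \<le> 1 \<Longrightarrow> layer_bounded 2 (clip_layer d j c)"
  unfolding clip_layer_def by (rule layer_bounded_sparse_layer) auto

lemma layer_bounded_init_layer: "layer_bounded 2 (init_layer d k)"
  unfolding init_layer_def by (rule layer_bounded_sparse_layer) auto

lemma layer_bounded_step_layer: "layer_bounded 19 (step_layer d r)"
proof -
  have "c / 4 ^ r \<le> c" if "0 \<le> c" for c :: real
    using that by (simp add: divide_le_eq mult_le_cancel_left1 order_trans)
  from this[of 1] this[of 2] this[of 4] this[of 8] show ?thesis
    unfolding step_layer_def by (intro layer_bounded_sparse_layer) (auto simp: abs_divide)
qed

lemma layer_bounded_out_layer: "layer_bounded 2 (out_layer d)"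
  unfolding out_layer_def by (rule layer_bounded_sparse_layer) auto

lemma layer_bounded_product_net: "\<forall>l\<in>set (product_net d m). layer_bounded 19 l"
  using layer_bounded_mono[of 2 19] layer_bounded_clip_layer layer_bounded_init_layer
    layer_bounded_step_layer layer_bounded_out_layer
  by (auto simp: product_net_def block_def)

section \<open>Size of the network\<close>

lemma le_power_nat_ceiling_log:
  fixes b v :: real
  assumes "1 < b" "0 < v"
  shows "v \<le> b ^ nat \<lceil>log b v\<rceil>"
proof -
  have "v = b powr log b v"
    using assms by simp
  also have "\<dots> \<le> b powr real (nat \<lceil>log b v\<rceil>)"
    using assms(1) by (intro powr_mono) linarith+
  also have "\<dots> = b ^ nat \<lceil>log b v\<rceil>"
    using assms(1) by (simp add: powr_realpow)
  finally show ?thesis .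
qed

lemma one_le_nat_ceiling_log:
  fixes b v :: real
  assumes "1 < b" "1 < v"
  shows "1 \<le> nat \<lceil>log b v\<rceil>"
  using assms by (simp add: Suc_le_eq)

lemma nat_ceiling_log4_le:
  assumes "0 < v"
  shows "real (nat \<lceil>log 4 v\<rceil>) \<le> max 0 (ln v) + 1"
proof -
  have "1 \<le> ln (4 :: real)"
    using exp_le by (simp add: ln_ge_iff)
  then have "log 4 v \<le> max 0 (ln v)"
    unfolding log_def
    by (cases "0 \<le> ln v") (auto simp: divide_le_eq divide_nonpos_pos mult_le_cancel_left1)
  then show ?thesis
    by linarith
qed

lemma width_bound:
  assumes "1 < d"
  shows "d + 9 \<le> 21 * 2 ^ (nat \<lceil>log 2 (real d)\<rceil> - 1)"
proof -
  define a where "a = nat \<lceil>log 2 (real d)\<rceil>"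
  have "1 \<le> a"
    using one_le_nat_ceiling_log[of 2 "real d"] assms by (simp add: a_def)
  have "real d \<le> 2 ^ a"
    using le_power_nat_ceiling_log[of 2 "real d"] assms by (simp add: a_def)
  then have "d \<le> 2 * 2 ^ (a - 1)"
    using \<open>1 \<le> a\<close> by (metis of_nat_le_iff of_nat_numeral of_nat_power power_eq_if not_one_le_zero)
  moreover have "1 \<le> (2 :: nat) ^ (a - 1)"
    by simp
  ultimately show ?thesis
    unfolding a_def[symmetric] by linarith
qed

lemma length_product_net_le:
  assumes "0 < d" "0 < \<epsilon>" "1 \<le> K"
  shows "real (length (product_net d (nat \<lceil>log 4 (d / \<epsilon>)\<rceil>)))
    \<le> (real d + 3)\<^sup>2 * max 1 (ln (K / \<epsilon>))"
proof -
  define m where "m = nat \<lceil>log 4 (d / \<epsilon>)\<rceil>"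
  define M where "M = max 1 (ln (K / \<epsilon>))"
  have "ln (d / \<epsilon>) = ln d - ln \<epsilon>" "ln (K / \<epsilon>) = ln K - ln \<epsilon>"
    using assms by (simp_all add: ln_div)
  moreover have "0 \<le> ln K" "ln d \<le> d"
    using assms ln_le_minus_one[of "real d"] by simp_all
  ultimately have "max 0 (ln (d / \<epsilon>)) \<le> d + M"
    unfolding M_def by (simp add: max_def)
  moreover have "0 < d / \<epsilon>"
    using assms by simp
  ultimately have "real m \<le> d + M + 1"
    using nat_ceiling_log4_le unfolding m_def by fastforce
  have "real (length (product_net d m)) = real (d - 1) * (real m + 2) + 2"
    by (simp only: length_product_net of_nat_add of_nat_mult) simp
  also have "\<dots> \<le> d * (real m + 2) + 2"
    by (intro add_right_mono mult_right_mono) auto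
  also have "\<dots> \<le> d * (d + M + 3) + 2"
    using \<open>real m \<le> d + M + 1\<close> by (intro add_right_mono mult_left_mono) auto
  also have "\<dots> \<le> (real d + 3)\<^sup>2 * M"
  proof -
    have "((real d)\<^sup>2 + 5 * real d + 9) * 1 \<le> ((real d)\<^sup>2 + 5 * real d + 9) * M"
      by (intro mult_left_mono) (simp_all add: M_def)
    then show ?thesis
      by (simp add: power2_eq_square algebra_simps)
  qed
  finally show ?thesis
    by (simp add: m_def M_def)
qed

lemma product_net_error_le:
  assumes "0 < d" "0 < \<epsilon>"
  shows "(real d - 1) / (2 * 4 ^ nat \<lceil>log 4 (d / \<epsilon>)\<rceil>) \<le> \<epsilon>"
proof -
  have "real d / \<epsilon> \<le> 4 ^ nat \<lceil>log 4 (d / \<epsilon>)\<rceil>"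
    using le_power_nat_ceiling_log[of 4 "d / \<epsilon>"] assms by simp
  then show ?thesis
    using assms by (simp add: divide_le_eq field_simps)
qed

lemma product_net_approximates:
  assumes "1 < d" "d + 9 \<le> W" "0 < \<epsilon>" "1 \<le> K"
  shows "\<exists>L ls. relu_fnn d W L ((real d + 3)\<^sup>2) ls \<and>
    real L \<le> (real d + 3)\<^sup>2 * max 1 (ln (K / \<epsilon>)) \<and>
    (\<forall>x. (\<forall>i<d. 0 \<le> x i \<and> x i \<le> 1) \<longrightarrow> \<bar>fnn_fun d W ls x - (\<Prod>i<d. x i)\<bar> \<le> \<epsilon>)"
proof (intro exI conjI allI impI)
  define ls where "ls = product_net d (nat \<lceil>log 4 (d / \<epsilon>)\<rceil>)"
  have "0 < d" "(5 :: real) \<le> real d + 3"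
    using assms(1) by simp_all
  then have "(19 :: real) \<le> (real d + 3)\<^sup>2"
    using mult_mono[of 5 "real d + 3" 5 "real d + 3"] by (simp add: power2_eq_square)
  then show "relu_fnn d W (length ls) ((real d + 3)\<^sup>2) ls"
    using layer_bounded_product_net layer_bounded_mono
    by (intro relu_fnn_if_layer_bounded) (auto simp: ls_def product_net_def)
  show "real (length ls) \<le> (real d + 3)\<^sup>2 * max 1 (ln (K / \<epsilon>))"
    using length_product_net_le[OF \<open>0 < d\<close> assms(3,4)] by (simp add: ls_def)
  show "\<bar>fnn_fun d W ls x - (\<Prod>i<d. x i)\<bar> \<le> \<epsilon>" if "\<forall>i<d. 0 \<le> x i \<and> x i \<le> 1" for x
    using product_net_correct[OF assms(2) \<open>0 < d\<close> that] product_net_error_le[OF \<open>0 < d\<close> assms(3)]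
    unfolding ls_def by (rule order_trans)
qed

theorem lemma13:
  fixes d :: nat
  assumes "d > 1"
  shows "let a = nat \<lceil>log 2 (real d)\<rceil> in
    \<exists>C::real. \<forall>\<epsilon>::real.
      0 < \<epsilon> \<and> ((3::real) ^ (a - 1) - 1 \<noteq> 0 \<longrightarrow> \<epsilon> \<le> (3 ^ a - 1) / (3 ^ (a - 1) - 1)) \<longrightarrow>
      (\<exists>L ls. relu_fnn d (21 * 2 ^ (a - 1)) L C ls \<and>
         real L \<le> C * max 1 (ln ((3 ^ a - 1) / (2 * \<epsilon>))) \<and>
         (\<forall>x. (\<forall>i<d. 0 \<le> x i \<and> x i \<le> 1) \<longrightarrow>
            \<bar>fnn_fun d (21 * 2 ^ (a - 1)) ls x - (\<Prod>i<d. x i)\<bar> \<le> \<epsilon>))"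
proof -
  define a where "a = nat \<lceil>log 2 (real d)\<rceil>"
  have width: "d + 9 \<le> 21 * 2 ^ (a - 1)"
    using width_bound[OF assms] by (simp add: a_def)
  have "(3 :: real) ^ 1 \<le> 3 ^ a"
    using one_le_nat_ceiling_log[of 2 "real d"] assms by (intro power_increasing) (simp_all add: a_def)
  then have K: "1 \<le> (3 ^ a - 1) / (2 :: real)"
    by simp
  show ?thesis
    unfolding Let_def a_def[symmetric]
    using product_net_approximates[OF assms width _ K]
    by (intro exI[of _ "(real d + 3)\<^sup>2"]) (simp add: divide_divide_eq_left)
qed

end
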